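(* Let $X$ be a real normed space, let $C$ be a non-empty convex subset of $X$, and let $f:X\times X\to\mathbb{R}$ be a bifunction such that for each $x\in C$ the function $f(x,\cdot)$ is lower semicontinuous. If $f$ is properly quasi-monotone on $C$, then $f$ has the star finite intersection property (fip$^*$) on $C$.
   Context: A bifunction $f:X\times X\to\mathbb{R}$ is properly quasi-monotone on a convex set $C\subset X$ if for every finite non-empty subset $A$ of $C$ and every $x\in\operatorname{co}(A)$ (the convex hull of $A$) one has $\min_{a\in A} f(a,x)\leq 0$. The bifunction $f$ has the star finite intersection property (fip$^*$) on a convex set $C\subset X$ if for every finite non-empty subset $A$ of $C$ there exists $x\in\operatorname{co}(A)$ such that $\max_{a\in A} f(a,x)\leq 0$. *)

theory Defs
  imports "HOL-Analysis.Analysis"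
begin

definition lsc :: "('a::topological_space \<Rightarrow> real) \<Rightarrow> bool" where
  "lsc g \<longleftrightarrow> (\<forall>t::real. closed {y. g y \<le> t})"

definition properly_quasi_monotone :: "('a::real_vector \<Rightarrow> 'a \<Rightarrow> real) \<Rightarrow> 'a set \<Rightarrow> bool" where
  "properly_quasi_monotone f C \<longleftrightarrow>
     (\<forall>A. finite A \<and> A \<noteq> {} \<and> A \<subseteq> C \<longrightarrow> (\<forall>x \<in> convex hull A. Min ((\<lambda>a. f a x) ` A) \<le> 0))"

definition fip_star :: "('a::real_vector \<Rightarrow> 'a \<Rightarrow> real) \<Rightarrow> 'a set \<Rightarrow> bool" where
  "fip_star f C \<longleftrightarrow>
     (\<forall>A. finite A \<and> A \<noteq> {} \<and> A \<subseteq> C \<longrightarrow> (\<exists>x \<in> convex hull A. Max ((\<lambda>a. f a x) ` A) \<le> 0))"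

end

(*
  The sets {y. f a y <= 0}, a in A, are closed by lower semicontinuity, and proper
  quasi-monotonicity says precisely that the convex hull of every non-empty B of A is covered
  by the sets indexed by B. The Knaster-Kuratowski-Mazurkiewicz lemma then yields a point of
  co A lying in all of them, which is the point required by fip*.

  KKM is derived from Kuhn's combinatorial lemma (a cubical Sperner lemma): it gives approximate
  fixed points of Lipschitz self-maps of the cube, hence of the standard simplex via a Lipschitz
  retraction. If the closed sets had no common point in co A, normalising the cut-off distances
  to them gives a Lipschitz self-map of the simplex whose approximate fixed points lead to a
  point of some face outside all sets indexed by that face.
*)

theory Submission
  imports Defs
begin

text \<open>Points of \<open>\<real>\<^sup>n\<close> are functions \<open>nat \<Rightarrow> real\<close> of which only the coordinates below \<open>n\<close> matter,
  so that the dimension can depend on the cardinality of a finite set.\<close>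

definition l1_dist :: "nat \<Rightarrow> (nat \<Rightarrow> real) \<Rightarrow> (nat \<Rightarrow> real) \<Rightarrow> real" where
  "l1_dist n x y = (\<Sum>i<n. \<bar>x i - y i\<bar>)"

definition unit_cube :: "nat \<Rightarrow> (nat \<Rightarrow> real) set" where
  "unit_cube n = {x. \<forall>i<n. 0 \<le> x i \<and> x i \<le> 1}"

definition std_simplex :: "nat \<Rightarrow> (nat \<Rightarrow> real) set" where
  "std_simplex n = {x. (\<forall>i<n. 0 \<le> x i) \<and> (\<Sum>i<n. x i) = 1}"

lemma l1_dist_commute: "l1_dist n x y = l1_dist n y x"
  by (simp add: l1_dist_def abs_minus_commute)

lemma l1_dist_triangle: "l1_dist n x z \<le> l1_dist n x y + l1_dist n y z"
  unfolding l1_dist_def sum.distrib[symmetric] by (rule sum_mono) linarith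

lemma abs_component_le_l1_dist: "i < n \<Longrightarrow> \<bar>x i - y i\<bar> \<le> l1_dist n x y"
  unfolding l1_dist_def by (rule member_le_sum) auto

lemma std_simplex_subset_unit_cube: "std_simplex n \<subseteq> unit_cube n"
proof
  fix x assume x: "x \<in> std_simplex n"
  have "x i \<le> 1" if "i < n" for i
    using x that member_le_sum[of i "{..<n}" x] by (auto simp: std_simplex_def)
  with x show "x \<in> unit_cube n" by (auto simp: std_simplex_def unit_cube_def)
qed

lemma approx_fixpoint_coordinate:
  fixes F :: "(nat \<Rightarrow> real) \<Rightarrow> nat \<Rightarrow> real"
  assumes lip: "\<And>u v. u \<in> S \<Longrightarrow> v \<in> S \<Longrightarrow> l1_dist n (F u) (F v) \<le> K * l1_dist n u v"
    and "0 \<le> K" and i: "i < n" and "x \<in> S" "y \<in> S" "z \<in> S"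
    and xz: "l1_dist n x z \<le> \<delta>" and yz: "l1_dist n y z \<le> \<delta>"
    and up: "x i \<le> F x i" and down: "F y i \<le> y i"
  shows "\<bar>F z i - z i\<bar> \<le> (3 * K + 3) * \<delta>"
proof -
  have xy: "l1_dist n x y \<le> 2 * \<delta>"
    using l1_dist_triangle[of n x y z] xz yz by (simp add: l1_dist_commute)
  have "\<bar>F z i - F x i\<bar> \<le> K * \<delta>"
    using abs_component_le_l1_dist[OF i, of "F z" "F x"] lip[of z x] assms(4-6) xz \<open>0 \<le> K\<close>
    by (smt (verit) l1_dist_commute mult_left_mono)
  moreover have "\<bar>F x i - F y i\<bar> \<le> K * (2 * \<delta>)"
    using abs_component_le_l1_dist[OF i, of "F x" "F y"] lip[of x y] assms(4-6) xy \<open>0 \<le> K\<close>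
    by (smt (verit) mult_left_mono)
  moreover have "\<bar>x i - y i\<bar> \<le> 2 * \<delta>" "\<bar>x i - z i\<bar> \<le> \<delta>"
    using abs_component_le_l1_dist[OF i] xy xz by (metis order_trans)+
  ultimately show ?thesis
    using up down by (simp add: algebra_simps)
qed

lemma l1_dist_grid_cell:
  fixes q r :: "nat \<Rightarrow> nat" and p :: nat
  assumes "\<forall>j<n. q j \<le> r j \<and> r j \<le> q j + 1"
  shows "l1_dist n (\<lambda>j. r j / p) (\<lambda>j. q j / p) \<le> n / p"
proof -
  have "\<bar>r j / p - q j / p\<bar> \<le> 1 / p" if "j < n" for j
    using assms that by (auto simp: diff_divide_distrib[symmetric] divide_right_mono)
  then have "l1_dist n (\<lambda>j. r j / p) (\<lambda>j. q j / p) \<le> (\<Sum>j<n. 1 / p)"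
    unfolding l1_dist_def by (intro sum_mono) auto
  then show ?thesis
    by simp
qed

lemma kuhn_lemma_unit_cube:
  fixes lab :: "(nat \<Rightarrow> real) \<Rightarrow> nat \<Rightarrow> nat" and p :: nat
  assumes "0 < p" and lab01: "\<And>x i. lab x i \<le> 1"
    and lab_0: "\<And>x i. x \<in> unit_cube n \<Longrightarrow> i < n \<Longrightarrow> x i = 0 \<Longrightarrow> lab x i = 0"
    and lab_1: "\<And>x i. x \<in> unit_cube n \<Longrightarrow> i < n \<Longrightarrow> x i = 1 \<Longrightarrow> lab x i = 1"
  obtains z where "z \<in> unit_cube n"
    and "\<And>i. i < n \<Longrightarrow> \<exists>x \<in> unit_cube n. \<exists>y \<in> unit_cube n.
      l1_dist n x z \<le> n / p \<and> l1_dist n y z \<le> n / p \<and> lab x i = 0 \<and> lab y i = 1"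
proof -
  define grid where "grid v = (\<lambda>j. real (v j) / p)" for v :: "nat \<Rightarrow> nat"
  have grid_in: "grid v \<in> unit_cube n" if "\<forall>j<n. v j \<le> p" for v
    using that \<open>0 < p\<close> by (auto simp: grid_def unit_cube_def)
  obtain q where q_lt: "\<forall>i<n. q i < p"
    and q_cell: "\<forall>i<n. \<exists>r s. (\<forall>j<n. q j \<le> r j \<and> r j \<le> q j + 1) \<and>
      (\<forall>j<n. q j \<le> s j \<and> s j \<le> q j + 1) \<and> lab (grid r) i \<noteq> lab (grid s) i"
  proof (rule kuhn_lemma[of p n "\<lambda>v. lab (grid v)"])
    show "\<forall>x. (\<forall>i<n. x i \<le> p) \<longrightarrow> (\<forall>i<n. lab (grid x) i = 0 \<or> lab (grid x) i = 1)"
      using lab01 le_Suc_eq by auto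
    show "\<forall>x. (\<forall>i<n. x i \<le> p) \<longrightarrow> (\<forall>i<n. x i = 0 \<longrightarrow> lab (grid x) i = 0)"
      using lab_0 grid_in by (auto simp: grid_def)
    show "\<forall>x. (\<forall>i<n. x i \<le> p) \<longrightarrow> (\<forall>i<n. x i = p \<longrightarrow> lab (grid x) i = 1)"
      using lab_1 grid_in \<open>0 < p\<close> by (auto simp: grid_def)
  qed (use \<open>0 < p\<close> in auto)
  define z where "z = grid q"
  have cell_in: "grid r \<in> unit_cube n" if "\<forall>j<n. q j \<le> r j \<and> r j \<le> q j + 1" for r
    using that q_lt by (intro grid_in) (metis Suc_eq_plus1 Suc_leI order_trans)
  have cell_close: "l1_dist n (grid r) z \<le> n / p" if "\<forall>j<n. q j \<le> r j \<and> r j \<le> q j + 1" for r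
    unfolding grid_def z_def using that by (rule l1_dist_grid_cell)
  show ?thesis
  proof (rule that)
    show "z \<in> unit_cube n"
      unfolding z_def using q_lt by (intro grid_in) (auto intro: less_imp_le)
    show "\<exists>x \<in> unit_cube n. \<exists>y \<in> unit_cube n.
      l1_dist n x z \<le> n / p \<and> l1_dist n y z \<le> n / p \<and> lab x i = 0 \<and> lab y i = 1" if "i < n" for i
    proof -
      obtain r s where r: "\<forall>j<n. q j \<le> r j \<and> r j \<le> q j + 1"
        and s: "\<forall>j<n. q j \<le> s j \<and> s j \<le> q j + 1" and rs: "lab (grid r) i \<noteq> lab (grid s) i"
        using q_cell \<open>i < n\<close> by blast
      then have "lab (grid r) i = 0 \<and> lab (grid s) i = 1 \<or> lab (grid s) i = 0 \<and> lab (grid r) i = 1"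
        using lab01[of "grid r" i] lab01[of "grid s" i] by linarith
      then show ?thesis
        using cell_in[OF r] cell_in[OF s] cell_close[OF r] cell_close[OF s] by blast
    qed
  qed
qed

lemma unit_cube_approx_fixpoint:
  fixes F :: "(nat \<Rightarrow> real) \<Rightarrow> nat \<Rightarrow> real"
  assumes maps: "\<And>x. x \<in> unit_cube n \<Longrightarrow> F x \<in> unit_cube n"
    and lip: "\<And>x y. x \<in> unit_cube n \<Longrightarrow> y \<in> unit_cube n \<Longrightarrow>
      l1_dist n (F x) (F y) \<le> K * l1_dist n x y"
    and "0 \<le> K" and "0 < d"
  obtains z where "z \<in> unit_cube n" and "l1_dist n (F z) z < d"
proof -
  define lab where "lab x i = (if x i = 0 then 0 else if x i = 1 then 1
      else if x i \<le> F x i then 0 else (1::nat))" for x i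
  have up: "x i \<le> F x i" if "x \<in> unit_cube n" "i < n" "lab x i = 0" for x i
    using that maps[OF that(1)] by (auto simp: lab_def unit_cube_def split: if_splits)
  have down: "F x i \<le> x i" if "x \<in> unit_cube n" "i < n" "lab x i = 1" for x i
    using that maps[OF that(1)] by (auto simp: lab_def unit_cube_def split: if_splits)
  obtain p :: nat where p: "(3 * K + 3) * n * n / d < p"
    using reals_Archimedean2 by blast
  have "0 \<le> (3 * K + 3) * n * n / d"
    using \<open>0 \<le> K\<close> \<open>0 < d\<close> by simp
  with p have "0 < p"
    by linarith
  then obtain z where z: "z \<in> unit_cube n"
    and cell: "\<And>i. i < n \<Longrightarrow> \<exists>x \<in> unit_cube n. \<exists>y \<in> unit_cube n.
      l1_dist n x z \<le> n / p \<and> l1_dist n y z \<le> n / p \<and> lab x i = 0 \<and> lab y i = 1"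
    by (rule kuhn_lemma_unit_cube[of p lab]) (auto simp: lab_def)
  have "\<bar>F z i - z i\<bar> \<le> (3 * K + 3) * (n / p)" if "i < n" for i
    using cell[OF that] approx_fixpoint_coordinate[where S = "unit_cube n" and z = z]
      lip \<open>0 \<le> K\<close> that z up down by metis
  then have "l1_dist n (F z) z \<le> (\<Sum>i<n. (3 * K + 3) * (n / p))"
    unfolding l1_dist_def by (intro sum_mono) auto
  also have "\<dots> = (3 * K + 3) * n * n / p"
    by simp
  also have "\<dots> < d"
    using p \<open>0 < p\<close> \<open>0 < d\<close> by (simp add: field_simps)
  finally show ?thesis
    using that z by blast
qed

lemma abs_divide_diff_le:
  fixes p q p' q' c :: real
  assumes "0 \<le> p'" "p' \<le> q'" "0 < c" "c \<le> q" "c \<le> q'"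
  shows "\<bar>p / q - p' / q'\<bar> \<le> (\<bar>p - p'\<bar> + \<bar>q - q'\<bar>) / c"
proof -
  have "0 < q" "0 < q'"
    using assms by linarith+
  have "\<bar>p' / q'\<bar> \<le> 1"
    using assms \<open>0 < q'\<close> by simp
  then have "\<bar>p' / q' * (q' - q)\<bar> \<le> \<bar>q - q'\<bar>"
    unfolding abs_mult by (metis abs_ge_zero abs_minus_commute mult_left_le_one_le)
  then have num: "\<bar>(p - p') + p' / q' * (q' - q)\<bar> \<le> \<bar>p - p'\<bar> + \<bar>q - q'\<bar>"
    using abs_triangle_ineq[of "p - p'" "p' / q' * (q' - q)"] by linarith
  have "p / q - p' / q' = ((p - p') + p' / q' * (q' - q)) / q"
    using \<open>0 < q\<close> \<open>0 < q'\<close> by (simp add: field_simps)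
  then have "\<bar>p / q - p' / q'\<bar> = \<bar>(p - p') + p' / q' * (q' - q)\<bar> / q"
    using \<open>0 < q\<close> by simp
  also have "\<dots> \<le> (\<bar>p - p'\<bar> + \<bar>q - q'\<bar>) / q"
    using num \<open>0 < q\<close> by (intro divide_right_mono) auto
  also have "\<dots> \<le> (\<bar>p - p'\<bar> + \<bar>q - q'\<bar>) / c"
    using assms by (intro divide_left_mono) auto
  finally show ?thesis .
qed

definition sum_normalize :: "nat \<Rightarrow> real \<Rightarrow> (nat \<Rightarrow> real) \<Rightarrow> nat \<Rightarrow> real" where
  "sum_normalize n c u i = u i / max c (\<Sum>j<n. u j)"

lemma sum_normalize_in_std_simplex:
  assumes "\<forall>i<n. 0 \<le> u i" and "0 < c" and "c \<le> (\<Sum>j<n. u j)"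
  shows "sum_normalize n c u \<in> std_simplex n"
  using assms by (auto simp: std_simplex_def sum_normalize_def sum_divide_distrib[symmetric])

lemma l1_dist_sum_normalize:
  assumes "\<forall>i<n. 0 \<le> u i" "\<forall>i<n. 0 \<le> v i" and "0 < c"
  shows "l1_dist n (sum_normalize n c u) (sum_normalize n c v) \<le> (real n + 1) / c * l1_dist n u v"
proof -
  have "\<bar>max c (\<Sum>j<n. u j) - max c (\<Sum>j<n. v j)\<bar> \<le> \<bar>(\<Sum>j<n. u j) - (\<Sum>j<n. v j)\<bar>"
    by linarith
  also have "\<dots> \<le> l1_dist n u v"
    unfolding l1_dist_def sum_subtractf[symmetric] by (rule sum_abs)
  finally have max_le: "\<bar>max c (\<Sum>j<n. u j) - max c (\<Sum>j<n. v j)\<bar> \<le> l1_dist n u v" .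
  have "\<bar>sum_normalize n c u i - sum_normalize n c v i\<bar> \<le> (\<bar>u i - v i\<bar> + l1_dist n u v) / c"
    if "i < n" for i
  proof -
    have "v i \<le> (\<Sum>j<n. v j)"
      using assms(2) that by (intro member_le_sum) auto
    then have "\<bar>sum_normalize n c u i - sum_normalize n c v i\<bar>
        \<le> (\<bar>u i - v i\<bar> + \<bar>max c (\<Sum>j<n. u j) - max c (\<Sum>j<n. v j)\<bar>) / c"
      unfolding sum_normalize_def using assms that by (intro abs_divide_diff_le) auto
    also have "\<dots> \<le> (\<bar>u i - v i\<bar> + l1_dist n u v) / c"
      using max_le \<open>0 < c\<close> by (intro divide_right_mono) auto
    finally show ?thesis .
  qed
  then have "l1_dist n (sum_normalize n c u) (sum_normalize n c v)
      \<le> (\<Sum>i<n. (\<bar>u i - v i\<bar> + l1_dist n u v) / c)"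
    unfolding l1_dist_def by (intro sum_mono) auto
  also have "\<dots> = (l1_dist n u v + n * l1_dist n u v) / c"
    by (simp add: sum_divide_distrib[symmetric] sum.distrib l1_dist_def)
  also have "\<dots> = (real n + 1) / c * l1_dist n u v"
    by (simp add: field_simps)
  finally show ?thesis .
qed

text \<open>The deficit \<open>1 - \<Sum>x\<close> is added to coordinate \<open>0\<close>, so that the coordinate sum is at least
  \<open>1\<close> before normalising, and points of the simplex are left fixed.\<close>

definition simplex_retraction :: "nat \<Rightarrow> (nat \<Rightarrow> real) \<Rightarrow> nat \<Rightarrow> real" where
  "simplex_retraction n x =
     sum_normalize n 1 (\<lambda>i. x i + (if i = 0 then max 0 (1 - (\<Sum>j<n. x j)) else 0))"

lemma sum_lessThan_add_at_0:
  fixes n :: nat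
  assumes "0 < n"
  shows "(\<Sum>i<n. x i + (if i = 0 then a else 0)) = (\<Sum>i<n. x i) + (a :: real)"
proof -
  have "(\<Sum>i<n. if i = 0 then a else 0) = (if 0 \<in> {..<n} then a else 0)"
    by (rule sum.delta) simp
  with assms have "(\<Sum>i<n. if i = 0 then a else 0) = a"
    by simp
  then show ?thesis
    by (simp add: sum.distrib)
qed

lemma simplex_retraction_in_std_simplex:
  assumes "0 < n" and "\<forall>i<n. 0 \<le> x i"
  shows "simplex_retraction n x \<in> std_simplex n"
  unfolding simplex_retraction_def
  using assms by (intro sum_normalize_in_std_simplex) (auto simp: sum_lessThan_add_at_0)

lemma simplex_retraction_id:
  assumes "x \<in> std_simplex n"
  shows "simplex_retraction n x = x"
proof -
  have "0 < n"
    using assms by (cases n) (auto simp: std_simplex_def)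
  with assms show ?thesis
    by (simp add: simplex_retraction_def sum_normalize_def std_simplex_def sum_lessThan_add_at_0 fun_eq_iff)
qed

lemma l1_dist_simplex_retraction:
  assumes "\<forall>i<n. 0 \<le> x i" "\<forall>i<n. 0 \<le> y i"
  shows "l1_dist n (simplex_retraction n x) (simplex_retraction n y) \<le> 2 * (real n + 1) * l1_dist n x y"
proof (cases "n = 0")
  case False
  define pad where "pad x i = x i + (if i = 0 then max 0 (1 - (\<Sum>j<n. x j)) else (0::real))" for x i
  define \<Delta> where "\<Delta> = \<bar>max 0 (1 - (\<Sum>j<n. x j)) - max 0 (1 - (\<Sum>j<n. y j))\<bar>"
  have "\<Delta> \<le> \<bar>(\<Sum>j<n. x j) - (\<Sum>j<n. y j)\<bar>"
    unfolding \<Delta>_def by linarith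
  also have "\<dots> \<le> l1_dist n x y"
    unfolding l1_dist_def sum_subtractf[symmetric] by (rule sum_abs)
  finally have "\<Delta> \<le> l1_dist n x y" .
  have "l1_dist n (pad x) (pad y) \<le> (\<Sum>i<n. \<bar>x i - y i\<bar> + (if i = 0 then \<Delta> else 0))"
    unfolding l1_dist_def by (intro sum_mono) (auto simp: pad_def \<Delta>_def)
  also have "\<dots> \<le> 2 * l1_dist n x y"
    using False \<open>\<Delta> \<le> l1_dist n x y\<close> by (simp add: sum_lessThan_add_at_0 l1_dist_def)
  finally have "l1_dist n (pad x) (pad y) \<le> 2 * l1_dist n x y" .
  have "\<forall>i<n. 0 \<le> pad x i" "\<forall>i<n. 0 \<le> pad y i"
    using assms by (auto simp: pad_def)
  then have "l1_dist n (simplex_retraction n x) (simplex_retraction n y)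
      \<le> (real n + 1) / 1 * l1_dist n (pad x) (pad y)"
    unfolding simplex_retraction_def pad_def[symmetric] by (intro l1_dist_sum_normalize) auto
  also have "\<dots> \<le> (real n + 1) / 1 * (2 * l1_dist n x y)"
    using \<open>l1_dist n (pad x) (pad y) \<le> 2 * l1_dist n x y\<close> by (intro mult_left_mono) auto
  finally show ?thesis
    by (simp add: algebra_simps)
qed (simp add: l1_dist_def)

lemma std_simplex_approx_fixpoint:
  fixes G :: "(nat \<Rightarrow> real) \<Rightarrow> nat \<Rightarrow> real"
  assumes "0 < n"
    and maps: "\<And>x. x \<in> std_simplex n \<Longrightarrow> G x \<in> std_simplex n"
    and lip: "\<And>x y. x \<in> std_simplex n \<Longrightarrow> y \<in> std_simplex n \<Longrightarrow>
      l1_dist n (G x) (G y) \<le> K * l1_dist n x y"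
    and "0 \<le> K" and "0 < d"
  obtains x where "x \<in> std_simplex n" and "l1_dist n (G x) x < d"
proof -
  let ?r = "simplex_retraction n"
  have r_in: "?r t \<in> std_simplex n" if "t \<in> unit_cube n" for t
    using that \<open>0 < n\<close> by (intro simplex_retraction_in_std_simplex) (auto simp: unit_cube_def)
  have G_lip: "l1_dist n (G (?r t)) (G (?r t')) \<le> (K * (2 * (real n + 1))) * l1_dist n t t'"
    if "t \<in> unit_cube n" "t' \<in> unit_cube n" for t t'
  proof -
    have "l1_dist n (G (?r t)) (G (?r t')) \<le> K * l1_dist n (?r t) (?r t')"
      using lip r_in that by blast
    also have "\<dots> \<le> K * (2 * (real n + 1) * l1_dist n t t')"
      using that \<open>0 \<le> K\<close>
      by (intro mult_left_mono l1_dist_simplex_retraction) (auto simp: unit_cube_def)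
    finally show ?thesis by simp
  qed
  have G_maps: "G (?r t) \<in> unit_cube n" if "t \<in> unit_cube n" for t
    using maps r_in that std_simplex_subset_unit_cube by blast
  have "0 \<le> K * (2 * (real n + 1))" "0 < d / (2 * (real n + 1))"
    using \<open>0 \<le> K\<close> \<open>0 < d\<close> by simp_all
  then obtain t where t: "t \<in> unit_cube n" "l1_dist n (G (?r t)) t < d / (2 * (real n + 1))"
    using unit_cube_approx_fixpoint[of n "\<lambda>t. G (?r t)" "K * (2 * (real n + 1))"] G_maps G_lip by blast
  show ?thesis
  proof (rule that)
    show "?r t \<in> std_simplex n"
      using r_in t(1) .
    have "l1_dist n (G (?r t)) (?r t) = l1_dist n (?r (G (?r t))) (?r t)"
      using simplex_retraction_id maps r_in t(1) by metis
    also have "\<dots> \<le> 2 * (real n + 1) * l1_dist n (G (?r t)) t"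
      using maps[OF r_in[OF t(1)]] t(1)
      by (intro l1_dist_simplex_retraction) (auto simp: std_simplex_def unit_cube_def)
    also have "\<dots> < d"
      using t(2) by (simp add: field_simps)
    finally show "l1_dist n (G (?r t)) (?r t) < d" .
  qed
qed

lemma dist_sum_scaleR_le:
  fixes e :: "nat \<Rightarrow> 'a::real_normed_vector"
  shows "dist (\<Sum>i<n. s i *\<^sub>R e i) (\<Sum>i<n. t i *\<^sub>R e i) \<le> (\<Sum>i<n. norm (e i)) * l1_dist n s t"
proof -
  have "dist (\<Sum>i<n. s i *\<^sub>R e i) (\<Sum>i<n. t i *\<^sub>R e i) = norm (\<Sum>i<n. (s i - t i) *\<^sub>R e i)"
    by (simp add: dist_norm sum_subtractf[symmetric] scaleR_diff_left)
  also have "\<dots> \<le> (\<Sum>i<n. \<bar>s i - t i\<bar> * norm (e i))"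
    by (rule order_trans[OF norm_sum]) simp
  also have "\<dots> \<le> (\<Sum>i<n. \<bar>s i - t i\<bar> * (\<Sum>j<n. norm (e j)))"
    by (intro sum_mono mult_left_mono member_le_sum) auto
  finally show ?thesis
    by (simp add: l1_dist_def sum_distrib_right[symmetric] mult.commute)
qed

lemma sum_scaleR_in_convex_hull:
  assumes "t \<in> std_simplex n"
  shows "(\<Sum>i<n. t i *\<^sub>R e i) \<in> convex hull (e ` {i. i < n \<and> 0 < t i})"
proof -
  let ?B = "{i. i < n \<and> 0 < t i}"
  have nonneg: "\<forall>i<n. 0 \<le> t i" and "(\<Sum>i<n. t i) = 1"
    using assms by (simp_all add: std_simplex_def)
  have B_sub: "?B \<subseteq> {..<n}"
    by auto
  have zero: "\<forall>i\<in>{..<n} - ?B. t i = 0"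
  proof
    fix i
    assume "i \<in> {..<n} - ?B"
    then have "0 \<le> t i" "\<not> 0 < t i"
      using nonneg by auto
    then show "t i = 0"
      by linarith
  qed
  have "(\<Sum>i\<in>?B. t i *\<^sub>R e i) \<in> convex hull (e ` ?B)"
  proof (rule convex_sum)
    show "(\<Sum>i\<in>?B. t i) = 1"
      using sum.mono_neutral_left[OF finite_lessThan B_sub zero] \<open>(\<Sum>i<n. t i) = 1\<close> by simp
    show "finite ?B"
      using finite_subset[OF B_sub] by simp
    show "convex (convex hull (e ` ?B))"
      by (rule convex_convex_hull)
    show "0 \<le> t i" if "i \<in> ?B" for i
      using that by simp
    show "e i \<in> convex hull (e ` ?B)" if "i \<in> ?B" for i
      using that by (simp add: hull_inc)
  qed
  moreover have "(\<Sum>i<n. t i *\<^sub>R e i) = (\<Sum>i\<in>?B. t i *\<^sub>R e i)"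
    using zero by (intro sum.mono_neutral_right[OF finite_lessThan B_sub]) (metis scaleR_zero_left)
  ultimately show ?thesis
    by simp
qed

lemma compact_uniform_margin:
  fixes h :: "nat \<Rightarrow> 'a::topological_space \<Rightarrow> real"
  assumes "compact K" and cont: "\<And>i. i < n \<Longrightarrow> continuous_on K (h i)"
    and pos: "\<And>x. x \<in> K \<Longrightarrow> \<exists>i<n. 0 < h i x"
  obtains c where "0 < c" and "\<And>x. x \<in> K \<Longrightarrow> \<exists>i<n. c < h i x"
proof (cases "K = {}")
  case False
  define S where "S x = (\<Sum>i<n. max 0 (h i x))" for x
  have "continuous_on K S"
    unfolding S_def using cont by (intro continuous_intros) auto
  then obtain x0 where "x0 \<in> K" and x0_min: "\<And>x. x \<in> K \<Longrightarrow> S x0 \<le> S x"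
    using continuous_attains_inf[OF \<open>compact K\<close> False] by blast
  obtain i where "i < n" "0 < h i x0"
    using pos[OF \<open>x0 \<in> K\<close>] by blast
  then have "0 < S x0"
    unfolding S_def by (intro sum_pos2[of _ i]) auto
  show ?thesis
  proof (rule that)
    show "0 < S x0 / (n + 1)"
      using \<open>0 < S x0\<close> by simp
    show "\<exists>i<n. S x0 / (n + 1) < h i x" if "x \<in> K" for x
    proof (rule ccontr)
      assume none: "\<not> ?thesis"
      have "max 0 (h i x) \<le> S x0 / (n + 1)" if "i < n" for i
      proof -
        have "h i x \<le> S x0 / (n + 1)"
          using none that not_less by blast
        then show ?thesis
          using \<open>0 < S x0\<close> by simp
      qed
      then have "S x \<le> (\<Sum>i<n. S x0 / (n + 1))"
        unfolding S_def[of x] by (intro sum_mono) auto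
      also have "\<dots> < S x0"
        using \<open>0 < S x0\<close> by (simp add: field_simps)
      finally show False
        using x0_min[OF that] by simp
    qed
  qed
qed (rule that[of 1]; simp)

definition cutoff_weights :: "nat \<Rightarrow> real \<Rightarrow> (nat \<Rightarrow> 'a \<Rightarrow> real) \<Rightarrow> 'a \<Rightarrow> nat \<Rightarrow> real" where
  "cutoff_weights n c h x = sum_normalize n c (\<lambda>i. max 0 (h i x - c))"

lemma cutoff_weights_in_std_simplex:
  assumes "0 < c" and "i < n" and "2 * c \<le> h i x"
  shows "cutoff_weights n c h x \<in> std_simplex n"
proof -
  have "c \<le> max 0 (h i x - c)"
    using assms by simp
  also have "\<dots> \<le> (\<Sum>j<n. max 0 (h j x - c))"
    using \<open>i < n\<close> by (intro member_le_sum) auto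
  finally show ?thesis
    unfolding cutoff_weights_def using \<open>0 < c\<close> by (intro sum_normalize_in_std_simplex) auto
qed

lemma cutoff_weights_pos_imp_gt:
  assumes "0 < c" and "0 < cutoff_weights n c h x i"
  shows "c < h i x"
  using assms by (auto simp: cutoff_weights_def sum_normalize_def zero_less_divide_iff)

lemma l1_dist_cutoff_weights:
  fixes h :: "nat \<Rightarrow> 'a::metric_space \<Rightarrow> real"
  assumes "0 < c" and lip: "\<And>i. i < n \<Longrightarrow> \<bar>h i x - h i y\<bar> \<le> dist x y"
  shows "l1_dist n (cutoff_weights n c h x) (cutoff_weights n c h y) \<le> (real n + 1) / c * (n * dist x y)"
proof -
  have "\<bar>max 0 (h i x - c) - max 0 (h i y - c)\<bar> \<le> dist x y" if "i < n" for i
    using lip[OF that] by (auto simp: max_def abs_le_iff)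
  then have "l1_dist n (\<lambda>i. max 0 (h i x - c)) (\<lambda>i. max 0 (h i y - c)) \<le> n * dist x y"
    using sum_mono[of "{..<n}" "\<lambda>i. \<bar>max 0 (h i x - c) - max 0 (h i y - c)\<bar>" "\<lambda>_. dist x y"]
    by (simp add: l1_dist_def)
  have "l1_dist n (cutoff_weights n c h x) (cutoff_weights n c h y)
      \<le> (real n + 1) / c * l1_dist n (\<lambda>i. max 0 (h i x - c)) (\<lambda>i. max 0 (h i y - c))"
    unfolding cutoff_weights_def using \<open>0 < c\<close> by (intro l1_dist_sum_normalize) auto
  also have "\<dots> \<le> (real n + 1) / c * (n * dist x y)"
    using \<open>0 < c\<close> \<open>l1_dist n _ _ \<le> n * dist x y\<close> by (intro mult_left_mono) auto
  finally show ?thesis .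
qed

lemma cutoff_weights_sum_scaleR_in_std_simplex:
  assumes "0 < c" and margin: "\<And>x. x \<in> convex hull (e ` {..<n}) \<Longrightarrow> \<exists>i<n. 2 * c \<le> h i x"
    and t: "t \<in> std_simplex n"
  shows "cutoff_weights n c h (\<Sum>i<n. t i *\<^sub>R e i) \<in> std_simplex n"
proof -
  have "(\<Sum>i<n. t i *\<^sub>R e i) \<in> convex hull (e ` {..<n})"
    using sum_scaleR_in_convex_hull[OF t] hull_mono[of "e ` {i. i < n \<and> 0 < t i}" "e ` {..<n}"]
    by auto
  then obtain i where "i < n" "2 * c \<le> h i (\<Sum>i<n. t i *\<^sub>R e i)"
    using margin by blast
  then show ?thesis
    using \<open>0 < c\<close> by (rule cutoff_weights_in_std_simplex[rotated])
qed

lemma l1_dist_cutoff_weights_sum_scaleR: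
  fixes e :: "nat \<Rightarrow> 'a::real_normed_vector"
  assumes "0 < c" and lip: "\<And>i x y. i < n \<Longrightarrow> \<bar>h i x - h i y\<bar> \<le> dist x y"
  shows "l1_dist n (cutoff_weights n c h (\<Sum>i<n. s i *\<^sub>R e i)) (cutoff_weights n c h (\<Sum>i<n. t i *\<^sub>R e i))
    \<le> ((real n + 1) / c * n * (\<Sum>i<n. norm (e i))) * l1_dist n s t"
proof -
  have "l1_dist n (cutoff_weights n c h (\<Sum>i<n. s i *\<^sub>R e i)) (cutoff_weights n c h (\<Sum>i<n. t i *\<^sub>R e i))
      \<le> (real n + 1) / c * (n * dist (\<Sum>i<n. s i *\<^sub>R e i) (\<Sum>i<n. t i *\<^sub>R e i))"
    using \<open>0 < c\<close> lip by (rule l1_dist_cutoff_weights)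
  also have "\<dots> \<le> (real n + 1) / c * (n * ((\<Sum>i<n. norm (e i)) * l1_dist n s t))"
    using \<open>0 < c\<close> dist_sum_scaleR_le[where n = n and s = s and e = e and t = t] by (intro mult_left_mono) auto
  finally show ?thesis
    by (simp add: mult_ac)
qed

lemma convex_hull_infdist_uniform_margin:
  fixes e :: "nat \<Rightarrow> 'a::real_normed_vector"
  assumes "\<And>i. i < n \<Longrightarrow> closed (F i)" and "\<And>i. i < n \<Longrightarrow> F i \<noteq> {}"
    and "\<And>x. x \<in> convex hull (e ` {..<n}) \<Longrightarrow> \<exists>i<n. x \<notin> F i"
  obtains \<delta> where "0 < \<delta>" and "\<And>x. x \<in> convex hull (e ` {..<n}) \<Longrightarrow> \<exists>i<n. \<delta> < infdist x (F i)"
proof -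
  have "\<exists>i<n. 0 < infdist x (F i)" if "x \<in> convex hull (e ` {..<n})" for x
    using assms that by (meson infdist_pos_not_in_closed)
  moreover have "compact (convex hull (e ` {..<n}))"
    by (simp add: finite_imp_compact_convex_hull)
  moreover have "continuous_on (convex hull (e ` {..<n})) (\<lambda>x. infdist x (F i))" for i
    by (intro continuous_intros)
  ultimately show ?thesis
    using compact_uniform_margin[of "convex hull (e ` {..<n})" n "\<lambda>i x. infdist x (F i)"] that
    by blast
qed

lemma KKM_indexed:
  fixes e :: "nat \<Rightarrow> 'a::real_normed_vector" and F :: "nat \<Rightarrow> 'a set"
  assumes "0 < n" and closed: "\<And>i. i < n \<Longrightarrow> closed (F i)"
    and cover: "\<And>B. B \<subseteq> {..<n} \<Longrightarrow> B \<noteq> {} \<Longrightarrow> convex hull (e ` B) \<subseteq> (\<Union>i\<in>B. F i)"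
  shows "\<exists>x \<in> convex hull (e ` {..<n}). \<forall>i<n. x \<in> F i"
proof (rule ccontr)
  assume no_common: "\<not> ?thesis"
  define h where "h i x = infdist x (F i)" for i x
  obtain \<delta> where "0 < \<delta>" and margin: "\<And>x. x \<in> convex hull (e ` {..<n}) \<Longrightarrow> \<exists>i<n. \<delta> < h i x"
  proof (rule convex_hull_infdist_uniform_margin[OF closed])
    show "F i \<noteq> {}" if "i < n" for i
      using cover[of "{i}"] that by auto
  qed (use no_common h_def in auto)
  define c where "c = \<delta> / 2"
  define g where "g t = (\<Sum>i<n. t i *\<^sub>R e i)" for t
  define G where "G t = cutoff_weights n c h (g t)" for t
  define M where "M = (\<Sum>i<n. norm (e i))"
  have "0 < c" "0 \<le> M"
    using \<open>0 < \<delta>\<close> by (simp_all add: c_def M_def sum_nonneg)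
  have G_maps: "G t \<in> std_simplex n" if "t \<in> std_simplex n" for t
    unfolding G_def g_def using \<open>0 < c\<close> _ that
  proof (rule cutoff_weights_sum_scaleR_in_std_simplex)
    show "\<exists>i<n. 2 * c \<le> h i x" if "x \<in> convex hull (e ` {..<n})" for x
      using margin[OF that] by (force simp: c_def)
  qed
  have G_lip: "l1_dist n (G t) (G t') \<le> ((real n + 1) / c * n * M) * l1_dist n t t'" for t t'
    unfolding G_def g_def M_def using \<open>0 < c\<close>
    by (rule l1_dist_cutoff_weights_sum_scaleR) (simp add: h_def infdist_triangle_abs)
  moreover have "0 \<le> (real n + 1) / c * n * M" "0 < c / (M + 1)"
    using \<open>0 < c\<close> \<open>0 \<le> M\<close> by simp_all
  ultimately obtain t where t: "t \<in> std_simplex n" and t_fix: "l1_dist n (G t) t < c / (M + 1)"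
    using std_simplex_approx_fixpoint[where n = n and G = G] \<open>0 < n\<close> G_maps G_lip by blast
  define y where "y = g (G t)"
  have "dist (g t) y \<le> M * l1_dist n t (G t)"
    unfolding y_def g_def M_def by (rule dist_sum_scaleR_le)
  also have "\<dots> \<le> M * (c / (M + 1))"
    using t_fix \<open>0 \<le> M\<close> by (intro mult_left_mono) (auto simp: l1_dist_commute)
  also have "\<dots> < c"
    using \<open>0 < c\<close> \<open>0 \<le> M\<close> by (simp add: field_simps)
  finally have "dist (g t) y < c" .
  \<comment> \<open>\<open>y\<close> lies in the face spanned by the support \<open>B\<close> of \<open>G t\<close>, but every \<open>F i\<close> with
    \<open>i \<in> B\<close> is farther than \<open>c\<close> from \<open>g t\<close>.\<close>
  define B where "B = {i. i < n \<and> 0 < G t i}"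
  have "B \<noteq> {}"
  proof
    assume "B = {}"
    then have "\<forall>i<n. G t i = 0"
      using G_maps[OF t] by (force simp: B_def std_simplex_def)
    then show False
      using G_maps[OF t] by (simp add: std_simplex_def)
  qed
  then obtain i where "i \<in> B" "y \<in> F i"
    using cover[of B] sum_scaleR_in_convex_hull[OF G_maps[OF t], of e]
    unfolding y_def g_def B_def by blast
  have "c < h i (g t)"
    using \<open>i \<in> B\<close> \<open>0 < c\<close> unfolding B_def G_def by (blast intro: cutoff_weights_pos_imp_gt)
  moreover have "h i (g t) \<le> dist (g t) y"
    unfolding h_def using \<open>y \<in> F i\<close> by (rule infdist_le)
  ultimately show False
    using \<open>dist (g t) y < c\<close> by linarith
qed

lemma KKM:
  fixes A :: "'a::real_normed_vector set" and F :: "'a \<Rightarrow> 'a set"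
  assumes "finite A" and "A \<noteq> {}" and closed: "\<And>a. a \<in> A \<Longrightarrow> closed (F a)"
    and cover: "\<And>B. B \<subseteq> A \<Longrightarrow> B \<noteq> {} \<Longrightarrow> convex hull B \<subseteq> (\<Union>a\<in>B. F a)"
  shows "\<exists>x \<in> convex hull A. \<forall>a\<in>A. x \<in> F a"
proof -
  obtain e where "bij_betw e {..<card A} A"
    using ex_bij_betw_nat_finite[OF \<open>finite A\<close>] by (auto simp: atLeast0LessThan)
  then have e_image: "e ` {..<card A} = A"
    by (simp add: bij_betw_def)
  have "\<exists>x \<in> convex hull (e ` {..<card A}). \<forall>i<card A. x \<in> F (e i)"
  proof (rule KKM_indexed)
    show "0 < card A"
      using assms(1,2) by (simp add: card_gt_0_iff)
    show "closed (F (e i))" if "i < card A" for i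
      using closed e_image that by blast
    show "convex hull (e ` B) \<subseteq> (\<Union>i\<in>B. F (e i))" if "B \<subseteq> {..<card A}" "B \<noteq> {}" for B
      using cover[of "e ` B"] e_image that by auto
  qed
  then show ?thesis
    unfolding e_image by (metis e_image imageE lessThan_iff)
qed

theorem proposition3p1:
  fixes f :: "'a::real_normed_vector \<Rightarrow> 'a \<Rightarrow> real" and C :: "'a set"
  assumes "C \<noteq> {}" and "convex C"
    and "\<forall>x \<in> C. lsc (f x)"
    and "properly_quasi_monotone f C"
  shows "fip_star f C"
  unfolding fip_star_def
proof (intro allI impI)
  fix A
  assume A: "finite A \<and> A \<noteq> {} \<and> A \<subseteq> C"
  have "\<exists>x \<in> convex hull A. \<forall>a\<in>A. x \<in> {y. f a y \<le> 0}"
  proof (rule KKM)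
    show "closed {y. f a y \<le> 0}" if "a \<in> A" for a
      using assms(3) A that unfolding lsc_def by blast
    show "convex hull B \<subseteq> (\<Union>a\<in>B. {y. f a y \<le> 0})" if "B \<subseteq> A" "B \<noteq> {}" for B
    proof
      fix x
      assume "x \<in> convex hull B"
      with assms(4) A that have "Min ((\<lambda>a. f a x) ` B) \<le> 0"
        unfolding properly_quasi_monotone_def by (meson finite_subset order_trans)
      moreover have "Min ((\<lambda>a. f a x) ` B) \<in> (\<lambda>a. f a x) ` B"
        using A that by (intro Min_in) (auto intro: finite_subset)
      ultimately show "x \<in> (\<Union>a\<in>B. {y. f a y \<le> 0})"
        by auto
    qed
  qed (use A in auto)
  then show "\<exists>x \<in> convex hull A. Max ((\<lambda>a. f a x) ` A) \<le> 0"
    using A by auto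
qed

end
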